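(* Let $\Sigma$ be an alphabet with $|\Sigma|\geq 3$ and $n\geq 1$. If $g\colon\mathcal{T}(\Sigma)^n\to\mathcal{T}(\Sigma)$ is WCP, then there exists a polynomial $P_g(x_1,\ldots,x_n)$ such that $g(\vec u)=\widetilde{P_g}(\vec u)$ for all $\vec u\in\Sigma^n$.
   Context: Let $\Sigma$ be an alphabet not containing $0,1$. A binary tree over $\Sigma$ is a finite set $t \subseteq \{0,1\}^*\Sigma$ such that for any $ua, vb \in t$ with $ua \neq vb$, $u$ is not a prefix of $v$ and $v$ is not a prefix of $u$; $\mathcal{T}(\Sigma)$ is the set of such trees, $\mathbf 0=\emptyset$, each letter $a$ is identified with $\{a\}$, and $t\star t' = 0.t\cup 1.t'$. Every map $h\colon\Sigma\to\mathcal{T}(\Sigma)$ extends uniquely to an endomorphism of $\langle\mathcal{T}(\Sigma),\star\rangle$, still denoted $h$. A function $g\colon\mathcal{T}(\Sigma)^n\to\mathcal{T}(\Sigma)$ is WCP if for every idempotent mapping $h\colon\Sigma\to\Sigma$ and all $\vec u,\vec v\in\Sigma^n$, $h(\vec u)=h(\vec v)$ implies $h(g(\vec u))=h(g(\vec v))$, where $h(\langle u_1,\ldots,u_n\rangle)=\langle h(u_1),\ldots,h(u_n)\rangle$. Let $x_1,\ldots,x_n\notin\Sigma$ be variables. A polynomial $P(x_1,\ldots,x_n)$ is a tree over the alphabet $\Sigma\cup\{x_1,\ldots,x_n\}$; its polynomial function $\widetilde P\colon\mathcal{T}(\Sigma)^n\to\mathcal{T}(\Sigma)$ is defined, for $\vec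 u=\langle t_1,\ldots,t_n\rangle$, by $\widetilde P(\vec u)=P$ if $P=\mathbf 0$ or $P\in\Sigma$; $\widetilde P(\vec u)=t_i$ if $P=x_i$; $\widetilde P(\vec u)=\widetilde{P_1}(\vec u)\star\widetilde{P_2}(\vec u)$ if $P=P_1\star P_2$. *)

theory Defs
  imports Main "HOL-Library.Sublist"
begin

text \<open>A word of {0,1}*Sigma is represented as a pair (address, letter), with
  the address a bool list (False = 0, True = 1).\<close>
type_synonym 'a tree = "(bool list \<times> 'a) set"

definition is_tree :: "'a tree \<Rightarrow> bool" where
  "is_tree t \<longleftrightarrow> finite t \<and>
     (\<forall>(u, a) \<in> t. \<forall>(v, b) \<in> t. (u, a) \<noteq> (v, b) \<longrightarrow> \<not> prefix u v \<and> \<not> prefix v u)"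

definition leaf :: "'a \<Rightarrow> 'a tree" where
  "leaf a = {([], a)}"

definition star :: "'a tree \<Rightarrow> 'a tree \<Rightarrow> 'a tree" where
  "star t t' = {(False # u, a) | u a. (u, a) \<in> t} \<union> {(True # u, a) | u a. (u, a) \<in> t'}"

definition hom :: "('a \<Rightarrow> 'b tree) \<Rightarrow> 'a tree \<Rightarrow> 'b tree" where
  "hom h t = {(u @ v, b) | u a v b. (u, a) \<in> t \<and> (v, b) \<in> h a}"

definition is_WCP :: "nat \<Rightarrow> ('a tree list \<Rightarrow> 'a tree) \<Rightarrow> bool" where
  "is_WCP n g \<longleftrightarrow>
     (\<forall>h :: 'a \<Rightarrow> 'a. h \<circ> h = h \<longrightarrow>
        (\<forall>us vs. length us = n \<longrightarrow> length vs = n \<longrightarrow> map h us = map h vs \<longrightarrow>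
           hom (leaf \<circ> h) (g (map leaf us)) = hom (leaf \<circ> h) (g (map leaf vs))))"

text \<open>Polynomials in variables x_1..x_n: trees over 'a + nat, where Inr i is
  the variable x_(i+1), i < n.\<close>
definition is_poly :: "nat \<Rightarrow> ('a + nat) tree \<Rightarrow> bool" where
  "is_poly n P \<longleftrightarrow> is_tree P \<and> (\<forall>(w, s) \<in> P. \<forall>i. s = Inr i \<longrightarrow> i < n)"

definition poly_fun :: "('a + nat) tree \<Rightarrow> 'a tree list \<Rightarrow> 'a tree" where
  "poly_fun P ts = hom (\<lambda>s. case s of Inl a \<Rightarrow> leaf a | Inr i \<Rightarrow> ts ! i) P"

end

theory Submission imports Defs begin

text \<open>Since idempotent letter maps include the constant maps, a WCP function maps all
  inputs of length n to trees of one common shape, and the letter at each address w of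
  that shape is a function f_w of the n input letters that is again compatible with all
  idempotent maps. For three or more letters such an f_w is a constant or a projection:
  if it ever returns a letter absent from its arguments, collapsing letters shows it is
  constant; otherwise it is conservative, whether f_w u = x depends only on the set of
  positions where x occurs in u, the sets of positions that force the value form an
  ultrafilter on the n positions, and a finite ultrafilter is principal. Labelling each address w with that constant or variable
  gives the polynomial.\<close>

definition eval_symbol :: "'a + nat \<Rightarrow> 'a list \<Rightarrow> 'a" where
  "eval_symbol s us = (case s of Inl a \<Rightarrow> a | Inr i \<Rightarrow> us ! i)"

locale letter_WCP =
  fixes f :: "'a list \<Rightarrow> 'a" and n :: nat
  assumes third_letter: "\<And>x y :: 'a. \<exists>z. z \<noteq> x \<and> z \<noteq> y"
    and idempotent_compat: "\<And>h u v. h \<circ> h = h \<Longrightarrow> length u = n \<Longrightarrow> length v = n \<Longrightarrow>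
      map h u = map h v \<Longrightarrow> h (f u) = h (f v)"
begin

lemma other_letter: "\<exists>y :: 'a. y \<noteq> x"
  using third_letter by blast

lemma collapse:
  assumes "X \<noteq> {}" "length u = n" "length v = n"
    and "\<forall>j<n. u ! j = v ! j \<or> u ! j \<in> X \<and> v ! j \<in> X"
  shows "f u = f v \<or> f u \<in> X \<and> f v \<in> X"
proof -
  obtain x where x: "x \<in> X" using assms(1) by blast
  define h where "h y = (if y \<in> X then x else y)" for y
  have "h \<circ> h = h" using x by (auto simp: h_def)
  moreover have "map h u = map h v"
    using assms(2-4) by (intro nth_equalityI) (auto simp: h_def)
  ultimately have "h (f u) = h (f v)" using idempotent_compat assms(2,3) by blast
  then show ?thesis using x by (auto simp: h_def split: if_splits)
qed

text \<open>Collapsing all letters but c = f u0 gives f w = c for every w avoiding c; an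
  arbitrary v is reduced to that case by renaming c to some e, which leaves f v \<in> {c, e}
  for two different choices of e.\<close>

lemma nonconservative_imp_const:
  assumes u0: "length u0 = n" "f u0 \<notin> set u0" and v: "length v = n"
  shows "f v = f u0"
proof -
  define c where "c = f u0"
  obtain d where d: "d \<noteq> c" using other_letter by blast
  have avoiding: "f w = c" if "length w = n" "c \<notin> set w" for w
  proof -
    let ?X = "insert d (set u0 \<union> set w)"
    have "f u0 = f w \<or> f u0 \<in> ?X \<and> f w \<in> ?X"
      by (rule collapse) (use that u0 in \<open>auto simp: nth_mem\<close>)
    then show ?thesis using u0 d that unfolding c_def by auto
  qed
  have c_or: "f v = c \<or> f v = e" if "e \<noteq> c" for e
  proof -
    define v' where "v' = map (\<lambda>y. if y = c then e else y) v"
    have "f v' = c" by (rule avoiding) (use v that in \<open>auto simp: v'_def\<close>)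
    moreover have "f v = f v' \<or> f v \<in> {c, e} \<and> f v' \<in> {c, e}"
      by (rule collapse) (use v in \<open>auto simp: v'_def\<close>)
    ultimately show ?thesis by auto
  qed
  obtain e where "e \<noteq> c" "e \<noteq> d" using third_letter by blast
  then show ?thesis using c_or[OF d] c_or[of e] unfolding c_def by auto
qed

lemma eq_letter_iff_same_occurrences:
  assumes "length u = n" "length v = n" "\<forall>j<n. u ! j = x \<longleftrightarrow> v ! j = x"
  shows "f u = x \<longleftrightarrow> f v = x"
proof -
  have "f u = f v \<or> f u \<in> - {x} \<and> f v \<in> - {x}"
    by (rule collapse) (use assms other_letter in auto)
  then show ?thesis by auto
qed

definition ind_word :: "nat set \<Rightarrow> 'a \<Rightarrow> 'a \<Rightarrow> 'a list" where
  "ind_word A x y = map (\<lambda>j. if j \<in> A then x else y) [0..<n]"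

lemma length_ind_word [simp]: "length (ind_word A x y) = n"
  by (simp add: ind_word_def)

lemma nth_ind_word [simp]: "j < n \<Longrightarrow> ind_word A x y ! j = (if j \<in> A then x else y)"
  by (simp add: ind_word_def)

lemma set_ind_word: "set (ind_word A x y) \<subseteq> {x, y}"
  by (auto simp: ind_word_def)

context
  assumes conservative: "\<And>u. length u = n \<Longrightarrow> f u \<in> set u"
begin

definition decisive :: "nat set \<Rightarrow> bool" where
  "decisive A \<longleftrightarrow> (\<exists>x y. x \<noteq> y \<and> f (ind_word A x y) = x)"

lemma ind_word_rename_winner:
  assumes "x \<noteq> y" "z \<noteq> y" "x \<noteq> z"
  shows "f (ind_word A x y) = x \<longleftrightarrow> f (ind_word A z y) = z"
proof -
  have "f (ind_word A x y) \<in> {x, y}" "f (ind_word A z y) \<in> {z, y}"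
    using conservative set_ind_word length_ind_word by blast+
  moreover have "f (ind_word A x y) = f (ind_word A z y) \<or>
      f (ind_word A x y) \<in> {x, z} \<and> f (ind_word A z y) \<in> {x, z}"
    by (rule collapse) auto
  ultimately show ?thesis using assms by auto
qed

lemma decisive_iff:
  assumes "x \<noteq> y"
  shows "decisive A \<longleftrightarrow> f (ind_word A x y) = x"
proof -
  have rename_loser: "f (ind_word A x y) = x \<longleftrightarrow> f (ind_word A x y') = x"
    if "x \<noteq> y" "x \<noteq> y'" for x y y'
    by (rule eq_letter_iff_same_occurrences) (use that in auto)
  have "f (ind_word A x y) = x \<longleftrightarrow> f (ind_word A x' y') = x'"
    if "x \<noteq> y" "x' \<noteq> y'" for x y x' y'
  proof (cases "x = x'")
    case True
    then show ?thesis using rename_loser that by blast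
  next
    case False
    obtain z where z: "z \<noteq> x" "z \<noteq> x'" using third_letter by blast
    have "f (ind_word A x y) = x \<longleftrightarrow> f (ind_word A x z) = x" using rename_loser that z by metis
    also have "\<dots> \<longleftrightarrow> f (ind_word A x' z) = x'" using ind_word_rename_winner z False by metis
    also have "\<dots> \<longleftrightarrow> f (ind_word A x' y') = x'" using rename_loser that z by metis
    finally show ?thesis .
  qed
  then show ?thesis unfolding decisive_def using assms by blast
qed

lemma eq_iff_decisive:
  assumes "length u = n"
  shows "f u = x \<longleftrightarrow> decisive {j. j < n \<and> u ! j = x}"
proof -
  obtain y where y: "y \<noteq> x" using other_letter by blast
  have "f u = x \<longleftrightarrow> f (ind_word {j. j < n \<and> u ! j = x} x y) = x"
    by (rule eq_letter_iff_same_occurrences) (use assms y in auto)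
  then show ?thesis using decisive_iff y by metis
qed

lemma decisive_partition:
  assumes "A \<subseteq> {..<n}" "B \<subseteq> {..<n}" "A \<inter> B = {}"
  shows "decisive A \<and> \<not> decisive B \<and> \<not> decisive ({..<n} - A - B) \<or>
    \<not> decisive A \<and> decisive B \<and> \<not> decisive ({..<n} - A - B) \<or>
    \<not> decisive A \<and> \<not> decisive B \<and> decisive ({..<n} - A - B)"
proof -
  obtain a b :: 'a where ab: "a \<noteq> b" using other_letter by metis
  obtain c where c: "c \<noteq> a" "c \<noteq> b" using third_letter by blast
  define u where "u = map (\<lambda>j. if j \<in> A then a else if j \<in> B then b else c) [0..<n]"
  have len: "length u = n" by (simp add: u_def)
  have "f u \<in> set u" using conservative len by blast
  then have "f u \<in> {a, b, c}" by (auto simp: u_def)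
  moreover have "{j. j < n \<and> u ! j = a} = A" "{j. j < n \<and> u ! j = b} = B"
    "{j. j < n \<and> u ! j = c} = {..<n} - A - B"
    using assms ab c by (auto simp: u_def subset_iff split: if_split_asm)
  then have "f u = a \<longleftrightarrow> decisive A" "f u = b \<longleftrightarrow> decisive B"
    "f u = c \<longleftrightarrow> decisive ({..<n} - A - B)"
    using eq_iff_decisive[OF len] by simp_all
  ultimately show ?thesis using ab c by auto
qed

lemma not_decisive_empty: "\<not> decisive {}" and decisive_all: "decisive {..<n}"
  using decisive_partition[of "{}" "{}"] by auto

lemma decisive_compl:
  assumes "A \<subseteq> {..<n}"
  shows "decisive ({..<n} - A) \<longleftrightarrow> \<not> decisive A"
proof -
  have "{..<n} - A - ({..<n} - A) = {}" by auto
  then show ?thesis using decisive_partition[of A "{..<n} - A"] not_decisive_empty assms by auto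
qed

lemma decisive_mono:
  assumes "decisive A" "A \<subseteq> B" "B \<subseteq> {..<n}"
  shows "decisive B"
proof -
  have "{..<n} - A - (B - A) = {..<n} - B" using assms(2) by auto
  then have "\<not> decisive ({..<n} - B)"
    using decisive_partition[of A "B - A"] assms by auto
  then show ?thesis using decisive_compl assms(3) by blast
qed

lemma decisive_singleton: "\<exists>i<n. decisive {i}"
proof (rule ccontr)
  assume no_singleton: "\<not> ?thesis"
  have "decisive {k..<n}" if "k \<le> n" for k
    using that
  proof (induction k)
    case 0
    then show ?case using decisive_all by (simp add: atLeast0LessThan)
  next
    case (Suc k)
    then have k: "k < n" by simp
    have "\<not> decisive ({..<n} - {k..<n})"
      using decisive_compl[of "{k..<n}"] Suc.IH k by force
    moreover have "{..<n} - {k..<n} = {..<k}" using k by auto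
    ultimately have "\<not> decisive {..<k}" by simp
    moreover have "\<not> decisive {k}" using no_singleton k by blast
    moreover have "{k} \<subseteq> {..<n}" "{Suc k..<n} \<subseteq> {..<n}" "{k} \<inter> {Suc k..<n} = {}"
      using k by auto
    then have "decisive {k} \<or> decisive {Suc k..<n} \<or> decisive ({..<n} - {k} - {Suc k..<n})"
      using decisive_partition by blast
    moreover have "{..<n} - {k} - {Suc k..<n} = {..<k}" using k by auto
    ultimately show ?case by metis
  qed
  from this[of n] show False using not_decisive_empty by simp
qed

lemma projection: "\<exists>i<n. \<forall>u. length u = n \<longrightarrow> f u = u ! i"
proof -
  obtain i where i: "i < n" "decisive {i}" using decisive_singleton by blast
  have "f u = u ! i" if "length u = n" for u
  proof -
    have "decisive {j. j < n \<and> u ! j = u ! i}"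
      by (rule decisive_mono[OF i(2)]) (use i(1) in auto)
    then show ?thesis using eq_iff_decisive[OF that] by blast
  qed
  then show ?thesis using i(1) by blast
qed

end

theorem const_or_projection:
  "\<exists>s. (\<forall>i. s = Inr i \<longrightarrow> i < n) \<and> (\<forall>u. length u = n \<longrightarrow> f u = eval_symbol s u)"
proof (cases "\<forall>u. length u = n \<longrightarrow> f u \<in> set u")
  case True
  then obtain i where "i < n" "\<forall>u. length u = n \<longrightarrow> f u = u ! i"
    using projection by blast
  then show ?thesis by (intro exI[of _ "Inr i"]) (simp add: eval_symbol_def)
next
  case False
  then obtain u0 where "length u0 = n" "f u0 \<notin> set u0" by blast
  then have "\<forall>u. length u = n \<longrightarrow> f u = f u0"
    using nonconservative_imp_const by blast
  then show ?thesis by (intro exI[of _ "Inl (f u0)"]) (simp add: eval_symbol_def)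
qed

end

lemma third_letter_if_card_ge_3:
  assumes "card (UNIV :: 'a set) \<ge> 3"
  shows "\<exists>z :: 'a. z \<noteq> x \<and> z \<noteq> y"
proof (rule ccontr)
  assume "\<not> ?thesis"
  then have "UNIV \<subseteq> {x, y}" by auto
  then have "card (UNIV :: 'a set) \<le> card {x, y}" by (intro card_mono) simp_all
  also have "\<dots> \<le> 2" by (simp add: card_insert_le_m1)
  finally show False using assms by simp
qed

lemma is_tree_leaf: "is_tree (leaf a)"
  by (simp add: is_tree_def leaf_def)

lemma is_tree_graph_iff:
  "is_tree ((\<lambda>w. (w, \<sigma> w)) ` S) \<longleftrightarrow> finite S \<and> (\<forall>u\<in>S. \<forall>v\<in>S. u \<noteq> v \<longrightarrow> \<not> prefix u v)"
proof -
  have "finite ((\<lambda>w. (w, \<sigma> w)) ` S) \<longleftrightarrow> finite S"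
    by (rule finite_image_iff) (simp add: inj_on_def)
  then show ?thesis unfolding is_tree_def by auto
qed

definition label :: "'a tree \<Rightarrow> bool list \<Rightarrow> 'a" where
  "label t w = (THE a. (w, a) \<in> t)"

lemma label_eq:
  assumes "is_tree t" "(w, a) \<in> t"
  shows "label t w = a"
  unfolding label_def
  by (rule the_equality) (use assms in \<open>auto simp: is_tree_def\<close>)

lemma tree_eq_graph_label:
  assumes "is_tree t"
  shows "t = (\<lambda>w. (w, label t w)) ` fst ` t"
  using label_eq[OF assms] by force

lemma is_tree_relabel:
  assumes "is_tree t"
  shows "is_tree ((\<lambda>w. (w, \<sigma> w)) ` fst ` t)"
proof -
  have "is_tree ((\<lambda>w. (w, label t w)) ` fst ` t)"
    using assms by (subst (asm) tree_eq_graph_label[OF assms])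
  then show ?thesis unfolding is_tree_graph_iff .
qed

lemma hom_leaf_comp: "hom (leaf \<circ> h) t = (\<lambda>(w, a). (w, h a)) ` t"
  by (auto simp: hom_def leaf_def)

lemma hom_cong: "(\<And>w a. (w, a) \<in> t \<Longrightarrow> h a = h' a) \<Longrightarrow> hom h t = hom h' t"
  unfolding hom_def by blast

lemma poly_fun_map_leaf:
  assumes "\<forall>(w, s) \<in> P. \<forall>i. s = Inr i \<longrightarrow> i < length us"
  shows "poly_fun P (map leaf us) = (\<lambda>(w, s). (w, eval_symbol s us)) ` P"
proof -
  have "poly_fun P (map leaf us) = hom (leaf \<circ> (\<lambda>s. eval_symbol s us)) P"
    unfolding poly_fun_def
    by (rule hom_cong) (use assms in \<open>auto simp: eval_symbol_def split: sum.split\<close>)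
  then show ?thesis by (simp add: hom_leaf_comp)
qed

lemma tree_eq_poly_fun_relabel:
  assumes "is_tree t"
    and "\<And>w i. w \<in> fst ` t \<Longrightarrow> \<sigma> w = Inr i \<Longrightarrow> i < length us"
    and "\<And>w. w \<in> fst ` t \<Longrightarrow> label t w = eval_symbol (\<sigma> w) us"
  shows "t = poly_fun ((\<lambda>w. (w, \<sigma> w)) ` fst ` t) (map leaf us)"
proof -
  have "t = (\<lambda>w. (w, label t w)) ` fst ` t"
    by (rule tree_eq_graph_label[OF assms(1)])
  also have "\<dots> = (\<lambda>w. (w, eval_symbol (\<sigma> w) us)) ` fst ` t"
    using assms(3) by (intro image_cong) simp_all
  also have "\<dots> = poly_fun ((\<lambda>w. (w, \<sigma> w)) ` fst ` t) (map leaf us)"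
  proof -
    have "\<forall>(w, s) \<in> (\<lambda>w. (w, \<sigma> w)) ` fst ` t. \<forall>i. s = Inr i \<longrightarrow> i < length us"
      using assms(2) by auto
    then show ?thesis by (simp add: poly_fun_map_leaf image_image)
  qed
  finally show ?thesis .
qed

lemma WCP_shape:
  fixes g :: "'a tree list \<Rightarrow> 'a tree"
  assumes "is_WCP n g" "length us = n" "length vs = n"
  shows "fst ` g (map leaf us) = fst ` g (map leaf vs)"
proof -
  define h :: "'a \<Rightarrow> 'a" where "h = (\<lambda>_. undefined)"
  have "h \<circ> h = h" "map h us = map h vs"
    using assms(2,3) by (simp_all add: h_def comp_def map_replicate_const)
  then have "hom (leaf \<circ> h) (g (map leaf us)) = hom (leaf \<circ> h) (g (map leaf vs))"
    using assms unfolding is_WCP_def by blast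
  then have "fst ` hom (leaf \<circ> h) (g (map leaf us)) = fst ` hom (leaf \<circ> h) (g (map leaf vs))"
    by simp
  then show ?thesis unfolding hom_leaf_comp image_image by (simp add: case_prod_beta')
qed

lemma WCP_label_letter_WCP:
  fixes g :: "'a tree list \<Rightarrow> 'a tree"
  assumes wcp: "is_WCP n g" and trees: "\<And>us. length us = n \<Longrightarrow> is_tree (g (map leaf us))"
    and shape: "\<And>us. length us = n \<Longrightarrow> w \<in> fst ` g (map leaf us)"
    and third: "\<And>x y :: 'a. \<exists>z. z \<noteq> x \<and> z \<noteq> y"
  shows "letter_WCP (\<lambda>us. label (g (map leaf us)) w) n"
proof
  fix h :: "'a \<Rightarrow> 'a" and u v
  assume h: "h \<circ> h = h" and len: "length u = n" "length v = n" and huv: "map h u = map h v"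
  have at_w: "(w, label (g (map leaf us)) w) \<in> g (map leaf us)" if us: "length us = n" for us
  proof -
    obtain a where "(w, a) \<in> g (map leaf us)" using shape[OF us] by force
    then show ?thesis using label_eq[OF trees[OF us]] by simp
  qed
  have "(w, h (label (g (map leaf u)) w)) \<in> hom (leaf \<circ> h) (g (map leaf u))"
    unfolding hom_leaf_comp using at_w[OF len(1)] by (rule rev_image_eqI) simp
  also have "hom (leaf \<circ> h) (g (map leaf u)) = hom (leaf \<circ> h) (g (map leaf v))"
    using wcp h len huv unfolding is_WCP_def by blast
  finally obtain b where "(w, b) \<in> g (map leaf v)" "h b = h (label (g (map leaf u)) w)"
    unfolding hom_leaf_comp by auto
  then show "h (label (g (map leaf u)) w) = h (label (g (map leaf v)) w)"
    using label_eq[OF trees[OF len(2)]] by metis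
qed (rule third)

theorem mainTheorem10:
  fixes g :: "'a tree list \<Rightarrow> 'a tree" and n :: nat
  assumes "finite (UNIV :: 'a set)" and "card (UNIV :: 'a set) \<ge> 3"
    and "n \<ge> 1"
    and "\<forall>ts. length ts = n \<and> (\<forall>t \<in> set ts. is_tree t) \<longrightarrow> is_tree (g ts)"
    and "is_WCP n g"
  shows "\<exists>P. is_poly n P \<and> (\<forall>us. length us = n \<longrightarrow> g (map leaf us) = poly_fun P (map leaf us))"
proof -
  have trees: "is_tree (g (map leaf us))" if "length us = n" for us
    using assms(4) that by (auto simp: is_tree_leaf)
  define S where "S = fst ` g (map leaf (replicate n undefined))"
  have shape: "fst ` g (map leaf us) = S" if "length us = n" for us
    unfolding S_def by (rule WCP_shape[OF assms(5) that]) simp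
  have "\<exists>s. (\<forall>i. s = Inr i \<longrightarrow> i < n) \<and>
      (\<forall>us. length us = n \<longrightarrow> label (g (map leaf us)) w = eval_symbol s us)" if "w \<in> S" for w
    by (rule letter_WCP.const_or_projection, rule WCP_label_letter_WCP[OF assms(5) trees])
      (use shape that third_letter_if_card_ge_3[OF assms(2)] in auto)
  then obtain \<sigma> where \<sigma>: "\<And>w i. w \<in> S \<Longrightarrow> \<sigma> w = Inr i \<Longrightarrow> i < n"
    "\<And>w us. w \<in> S \<Longrightarrow> length us = n \<Longrightarrow> label (g (map leaf us)) w = eval_symbol (\<sigma> w) us"
    by metis
  define P where "P = (\<lambda>w. (w, \<sigma> w)) ` S"
  have "is_poly n P"
    using is_tree_relabel[OF trees, of "replicate n undefined"] \<sigma>(1)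
    unfolding is_poly_def P_def S_def by auto
  moreover have "g (map leaf us) = poly_fun P (map leaf us)" if "length us = n" for us
    using tree_eq_poly_fun_relabel[OF trees[OF that], of \<sigma>] \<sigma> that
    unfolding P_def shape[OF that] by simp
  ultimately show ?thesis by (intro exI[of _ P]) simp
qed

end
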